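(* Let $l_0\ge4$ be even and $G\in\operatorname{1\text{-}d\text{-}Ring}_{l_0}$. Then along the cycle $\operatorname U(G)$ the vertices alternate between black and white.
   Context: For a finite vertex set $V$ and $N\ge1$, a route through $V$ of length $N$ is a sequence $\mathbf i=(i_1,\dots,i_N)\in V^N$ whose set of entries equals $V$; its circuit multigraph $G_{\mathbf i}$ has vertex set $V$ and edges $1,\dots,N$, edge $k<N$ from $i_k$ to $i_{k+1}$, edge $N$ from $i_N$ to $i_1$; $\mathcal C_{V,N}$ is the set of these. The black vertices are $B(G_{\mathbf i})=\{i_t:t\text{ odd}\}$, the others white. $\operatorname U(G)$ is the simple undirected graph on $V$ having an edge $\{v,w\}$ whenever $G$ has an edge from $v$ to $w$ or from $w$ to $v$ (an undirected connection). A directed multigraph is balanced if its edges split into pairs $(e,e')$ with the head of $e$ the tail of $e'$ and vice versa. For $l_0\ge3$, $G\in\mathcal C_{V,2l_0}$ with $\#V=l_0$ is of ring-type if $\operatorname U(G)$ is a cycle through all $l_0$ vertices and each undirected connection consists of exactly two edges of $G$; $\operatorname{1\text{-}d\text{-}Ring}_{l_0}$ is the set of ring-type graphs with $l_0$ vertices that are not balanced. *)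

theory Defs
  imports Main
begin

(* A route i = (i_1,...,i_N) is represented as a list xs of length N, 0-indexed:
   i_{t} = xs ! (t-1).  The circuit multigraph G_i has edges k = 0..N-1 (paper: k+1),
   edge k going from xs!k (tail) to xs!((k+1) mod N) (head).  G_i is determined by
   (and determines) the route, so we identify G with (V, xs). *)

definition edge_tail :: "'a list \<Rightarrow> nat \<Rightarrow> 'a" where
  "edge_tail xs k = xs ! k"

definition edge_head :: "'a list \<Rightarrow> nat \<Rightarrow> 'a" where
  "edge_head xs k = xs ! ((k + 1) mod length xs)"

definition is_route :: "'a set \<Rightarrow> nat \<Rightarrow> 'a list \<Rightarrow> bool" where
  "is_route V N xs \<longleftrightarrow> N \<ge> 1 \<and> length xs = N \<and> set xs = V"

(* black vertices: i_t with t odd (1-indexed) = xs!t with t even (0-indexed) *)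
definition black :: "'a list \<Rightarrow> 'a set" where
  "black xs = {xs ! t | t. t < length xs \<and> even t}"

(* edge set of the simple undirected graph U(G) (loops are not edges of a simple graph) *)
definition U_edges :: "'a list \<Rightarrow> 'a set set" where
  "U_edges xs = {{edge_tail xs k, edge_head xs k} | k.
                   k < length xs \<and> edge_tail xs k \<noteq> edge_head xs k}"

definition cycle_through :: "'a set \<Rightarrow> 'a set set \<Rightarrow> 'a list \<Rightarrow> bool" where
  "cycle_through V E c \<longleftrightarrow> distinct c \<and> set c = V \<and> length c \<ge> 3 \<and>
     E = {{c ! j, c ! ((j + 1) mod length c)} | j. j < length c}"

definition conn_edges :: "'a list \<Rightarrow> 'a set \<Rightarrow> nat set" where
  "conn_edges xs e = {k. k < length xs \<and> {edge_tail xs k, edge_head xs k} = e}"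

definition balanced :: "'a list \<Rightarrow> bool" where
  "balanced xs \<longleftrightarrow> (\<exists>p. \<forall>k < length xs. p k < length xs \<and> p k \<noteq> k \<and> p (p k) = k \<and>
       edge_tail xs (p k) = edge_head xs k \<and> edge_head xs (p k) = edge_tail xs k)"

definition ring_type :: "nat \<Rightarrow> 'a set \<Rightarrow> 'a list \<Rightarrow> bool" where
  "ring_type l0 V xs \<longleftrightarrow> l0 \<ge> 3 \<and> finite V \<and> card V = l0 \<and> is_route V (2 * l0) xs \<and>
     (\<exists>c. cycle_through V (U_edges xs) c) \<and>
     (\<forall>e \<in> U_edges xs. card (conn_edges xs e) = 2)"

definition one_d_ring :: "nat \<Rightarrow> ('a set \<times> 'a list) set" where
  "one_d_ring l0 = {(V, xs). ring_type l0 V xs \<and> \<not> balanced xs}"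

end

theory Submission
  imports Defs
begin

text \<open>
  The l0 undirected connections of a ring-type graph carry two edges each, which accounts
  for all 2 l0 edges of the circuit: there are no loops, so every step of the route moves
  to a neighbour on the cycle. When the cycle has even length, the parity of the position
  on the cycle is a proper 2-colouring of it, hence consecutive route entries have opposite
  colours and the black vertices (even route positions) form one colour class.
\<close>

definition at_even_index :: "'a list \<Rightarrow> 'a \<Rightarrow> bool" where
  "at_even_index c v \<longleftrightarrow> (\<exists>i < length c. even i \<and> c ! i = v)"

lemma at_even_index_nth:
  assumes "distinct c" "i < length c"
  shows "at_even_index c (c ! i) \<longleftrightarrow> even i"
  using assms by (auto simp: at_even_index_def nth_eq_iff_index_eq)

lemma even_Suc_mod_iff:
  fixes n j :: nat
  assumes "even n"
  shows "even (Suc j mod n) \<longleftrightarrow> odd j"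
  using assms by (simp add: dvd_mod_iff)

lemma cycle_edge_opposite_parity:
  assumes "distinct c" "even (length c)"
    and "{u, w} \<in> {{c ! j, c ! ((j + 1) mod length c)} | j. j < length c}"
  shows "at_even_index c u \<longleftrightarrow> \<not> at_even_index c w"
proof -
  obtain j where j: "j < length c" "{u, w} = {c ! j, c ! ((j + 1) mod length c)}"
    using assms(3) by blast
  then have "(j + 1) mod length c < length c"
    by (intro mod_less_divisor) linarith
  then show ?thesis
    using j assms(1,2) by (auto simp: doubleton_eq_iff at_even_index_nth even_Suc_mod_iff)
qed

lemma cycle_through_length:
  assumes "cycle_through V E c"
  shows "length c = card V"
  using assms distinct_card[of c] by (simp add: cycle_through_def)

lemma card_cycle_edges:
  assumes "distinct c" "length c \<ge> 3"
  shows "card {{c ! j, c ! ((j + 1) mod length c)} | j. j < length c} = length c"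
proof -
  let ?n = "length c" and ?edge = "\<lambda>j. {c ! j, c ! ((j + 1) mod length c)}"
  have "inj_on ?edge {..<?n}"
  proof (rule inj_onI)
    fix i j assume ij: "i \<in> {..<?n}" "j \<in> {..<?n}" and "?edge i = ?edge j"
    moreover have "(i + 1) mod ?n < ?n" "(j + 1) mod ?n < ?n"
      using assms(2) by (intro mod_less_divisor; linarith)+
    ultimately have "i = j \<or> (i = (j + 1) mod ?n \<and> j = (i + 1) mod ?n)"
      using assms(1) by (auto simp: doubleton_eq_iff nth_eq_iff_index_eq)
    then show "i = j"
      using ij assms(2) by (auto simp: mod_Suc split: if_splits)
  qed
  moreover have "{?edge j | j. j < ?n} = ?edge ` {..<?n}" by auto
  ultimately show ?thesis by (simp add: card_image)
qed

lemma card_non_loop_edges: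
  "card {k. k < length xs \<and> edge_tail xs k \<noteq> edge_head xs k}
     = (\<Sum>e \<in> U_edges xs. card (conn_edges xs e))"
proof -
  have "{k. k < length xs \<and> edge_tail xs k \<noteq> edge_head xs k} = (\<Union>e \<in> U_edges xs. conn_edges xs e)"
    by (auto simp: U_edges_def conn_edges_def)
  moreover have "finite (U_edges xs)"
    by (rule finite_subset[of _ "(\<lambda>k. {edge_tail xs k, edge_head xs k}) ` {..<length xs}"])
       (auto simp: U_edges_def)
  moreover have "finite (conn_edges xs e)" for e
    by (simp add: conn_edges_def)
  moreover have "conn_edges xs e \<inter> conn_edges xs e' = {}" if "e \<noteq> e'" for e e'
    using that by (auto simp: conn_edges_def)
  ultimately show ?thesis by (simp add: card_UN_disjoint)
qed

lemma ring_type_loop_free: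
  assumes ring: "ring_type l0 V xs" and "k < length xs"
  shows "edge_tail xs k \<noteq> edge_head xs k"
proof -
  obtain c where c: "cycle_through V (U_edges xs) c"
    using ring by (auto simp: ring_type_def)
  then have "card (U_edges xs) = l0"
    using ring card_cycle_edges[of c] cycle_through_length[OF c]
    by (auto simp: cycle_through_def ring_type_def)
  have "card {k. k < length xs \<and> edge_tail xs k \<noteq> edge_head xs k}
          = (\<Sum>e \<in> U_edges xs. card (conn_edges xs e))"
    by (rule card_non_loop_edges)
  also have "\<dots> = 2 * card (U_edges xs)"
    using ring by (simp add: ring_type_def)
  also have "\<dots> = length xs"
    using \<open>card (U_edges xs) = l0\<close> ring by (simp add: ring_type_def is_route_def)
  finally have "{k. k < length xs \<and> edge_tail xs k \<noteq> edge_head xs k} = {..<length xs}"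
    by (intro card_subset_eq) auto
  then show ?thesis using assms(2) by blast
qed

lemma ring_type_route_alternates_parity:
  assumes ring: "ring_type l0 V xs" and c: "cycle_through V (U_edges xs) c"
    and "even l0" "Suc k < length xs"
  shows "at_even_index c (xs ! Suc k) \<longleftrightarrow> \<not> at_even_index c (xs ! k)"
proof -
  have "even (length c)"
    using cycle_through_length[OF c] ring \<open>even l0\<close> by (simp add: ring_type_def)
  moreover have "{edge_tail xs k, edge_head xs k} \<in> U_edges xs"
    using ring_type_loop_free[OF ring, of k] assms(4) by (auto simp: U_edges_def)
  ultimately show ?thesis
    using c assms(4) cycle_edge_opposite_parity[of c]
    by (simp add: cycle_through_def edge_tail_def edge_head_def)
qed

lemma black_iff_same_colour_as_first:
  fixes col :: "'a \<Rightarrow> bool"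
  assumes alternating: "\<And>k. Suc k < length xs \<Longrightarrow> col (xs ! Suc k) \<longleftrightarrow> \<not> col (xs ! k)"
    and "v \<in> set xs"
  shows "v \<in> black xs \<longleftrightarrow> col v = col (xs ! 0)"
proof -
  have colour_at: "col (xs ! t) \<longleftrightarrow> (col (xs ! 0) \<longleftrightarrow> even t)" if "t < length xs" for t
    using that by (induction t) (auto simp: alternating)
  obtain t where t: "t < length xs" "xs ! t = v"
    using assms(2) by (auto simp: in_set_conv_nth)
  show ?thesis
  proof
    assume "v \<in> black xs"
    then show "col v = col (xs ! 0)" by (auto simp: black_def colour_at)
  next
    assume "col v = col (xs ! 0)"
    then have "even t" using colour_at t by auto
    then show "v \<in> black xs" using t by (auto simp: black_def)
  qed
qed

theorem lemma4p7:
  fixes l0 :: nat and V :: "'a set" and xs :: "'a list" and c :: "'a list"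
  assumes "even l0" and "l0 \<ge> 4"
    and "(V, xs) \<in> one_d_ring l0"
    and "cycle_through V (U_edges xs) c"
  shows "\<forall>j < length c. (c ! j \<in> black xs \<longleftrightarrow> c ! ((j + 1) mod length c) \<notin> black xs)"
proof (intro allI impI)
  fix j assume j: "j < length c"
  have ring: "ring_type l0 V xs"
    using assms(3) by (simp add: one_d_ring_def)
  have "distinct c" "set xs = set c"
    using assms(4) ring by (simp_all add: cycle_through_def ring_type_def is_route_def)
  have black_iff: "v \<in> black xs \<longleftrightarrow> at_even_index c v = at_even_index c (xs ! 0)"
    if "v \<in> set c" for v
    using black_iff_same_colour_as_first[of xs "at_even_index c"]
      ring_type_route_alternates_parity[OF ring assms(4) assms(1)] that \<open>set xs = set c\<close>
    by simp
  have "even (length c)"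
    using cycle_through_length[OF assms(4)] ring assms(1) by (simp add: ring_type_def)
  moreover have "Suc j mod length c < length c"
    using j by (intro mod_less_divisor) linarith
  ultimately show "c ! j \<in> black xs \<longleftrightarrow> c ! ((j + 1) mod length c) \<notin> black xs"
    using black_iff j \<open>distinct c\<close> by (auto simp: at_even_index_nth even_Suc_mod_iff)
qed

end
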